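(* Let $\mathcal{I}$ and $\mathcal{J}$ be isomorphic sharp interval systems. For every hypergraph isomorphism $\psi$ from $\mathcal{I}$ to $\mathcal{J}$ there is a hypergraph isomorphism $\psi'$ from $\mathcal{I}$ to $\mathcal{J}$ such that $\psi'(A)=\psi(A)$ for all $A\in\mathcal{I}$ and, moreover, $\psi'$ maps the two extreme points of each interval $A\in\mathcal{I}$ onto the two extreme points of the interval $\psi(A)\in\mathcal{J}$.
   Context: An interval system is a hypergraph whose vertex set is $\{1,\dots,N\}$ and whose hyperedges are intervals of consecutive integers $[a,b]=\{a,a+1,\dots,b\}$; the extreme points of $[a,b]$ are $a$ and $b$. An interval system with $m$ intervals is sharp if $N=2m$ and the $2m$ extreme points of its intervals are pairwise distinct (so every point is the start or the end point of exactly one interval). A hypergraph isomorphism from $\mathcal{I}$ to $\mathcal{J}$ is a bijection between their vertex sets mapping the set of hyperedges of $\mathcal{I}$ onto that of $\mathcal{J}$. *)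

theory Defs
  imports Main
begin

definition interval_system :: "nat \<Rightarrow> nat set set \<Rightarrow> bool" where
  "interval_system N E \<longleftrightarrow> finite E \<and>
     (\<forall>A\<in>E. \<exists>a b. 1 \<le> a \<and> a \<le> b \<and> b \<le> N \<and> A = {a..b})"

definition extremes :: "nat set \<Rightarrow> nat set" where
  "extremes A = {Min A, Max A}"

definition sharp :: "nat \<Rightarrow> nat set set \<Rightarrow> bool" where
  "sharp N E \<longleftrightarrow> interval_system N E \<and> N = 2 * card E \<and>
     (\<forall>A\<in>E. Min A \<noteq> Max A) \<and>
     (\<forall>A\<in>E. \<forall>B\<in>E. A \<noteq> B \<longrightarrow> extremes A \<inter> extremes B = {})"

definition hyp_iso :: "(nat \<Rightarrow> nat) \<Rightarrow> nat set \<Rightarrow> nat set set \<Rightarrow> nat set \<Rightarrow> nat set set \<Rightarrow> bool" where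
  "hyp_iso f V E V' E' \<longleftrightarrow> bij_betw f V V' \<and> (\<lambda>A. f ` A) ` E = E'"

end

theory Submission
  imports Defs
begin

(*
  Let F = [a,b] be an interval of a sharp system I and B another interval of I.
  The number of extreme points of F lying in B depends only on the relative position of F
  and B: it is 2 if F \<subseteq> B, 0 if B \<subseteq> F (B \<noteq> F, by sharpness) or F \<inter> B = {}, and 1 if the
  two intervals cross.  A hypergraph isomorphism \<psi> preserves these relations, so the two
  \<psi>-preimages u < v of the extreme points of \<psi>(F) lie in exactly as many intervals B as
  the extreme points a, b of F.  As u, v \<in> [a,b], elementary interval arithmetic then gives
  u \<in> B \<longleftrightarrow> a \<in> B and v \<in> B \<longleftrightarrow> b \<in> B for every B \<in> I.
  The extreme points of a sharp system partition {1..N}, so the map \<sigma> sending a \<mapsto> u and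
  b \<mapsto> v for every interval is well defined; it preserves membership in every interval.
  The corrected isomorphism is \<psi>' = \<psi> \<circ> \<sigma>: it maps extreme points onto extreme points,
  hence is a bijection by the covering property, and \<psi>'(A) = \<psi>(A) by a cardinality argument.
*)

lemma Min_Max_interval [simp]:
  fixes a b :: nat
  assumes "a \<le> b"
  shows "Min {a..b} = a" "Max {a..b} = b"
  using assms by (auto intro!: Min_eqI Max_eqI)

lemma card_pair_Int:
  assumes "u \<noteq> v"
  shows "card ({u, v} \<inter> B) = of_bool (u \<in> B) + of_bool (v \<in> B)"
  using assms by (cases "u \<in> B"; cases "v \<in> B") auto

lemma crossing_interval_count:
  fixes a b c d :: nat
  assumes "a < b" "\<not> {a..b} \<subseteq> {c..d}" "\<not> {c..d} \<subseteq> {a..b}" "{a..b} \<inter> {c..d} \<noteq> {}"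
  shows "card ({a, b} \<inter> {c..d}) = 1"
  using assms card_pair_Int[of a b "{c..d}"] by (auto simp: subset_iff)

text \<open>If \<open>u < v\<close> lie in \<open>[a,b]\<close> and an interval contains as many of \<open>u, v\<close> as of \<open>a, b\<close>,
  then it contains \<open>u\<close> iff it contains \<open>a\<close>, and \<open>v\<close> iff it contains \<open>b\<close>:
  an interval meets \<open>[a,b]\<close> in an initial segment, a final segment, the whole, or an
  inner part containing neither endpoint.\<close>
lemma interval_transfer:
  fixes a b u v c d :: nat
  assumes "a \<le> u" "u < v" "v \<le> b"
    and "card ({u, v} \<inter> {c..d}) = card ({a, b} \<inter> {c..d})"
  shows "(u \<in> {c..d} \<longleftrightarrow> a \<in> {c..d}) \<and> (v \<in> {c..d} \<longleftrightarrow> b \<in> {c..d})"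
proof -
  have "of_bool (u \<in> {c..d}) + of_bool (v \<in> {c..d})
      = (of_bool (a \<in> {c..d}) + of_bool (b \<in> {c..d}) :: nat)"
    using assms card_pair_Int[of u v "{c..d}"] card_pair_Int[of a b "{c..d}"] by simp
  then show ?thesis using assms(1-3) by (auto simp: of_bool_def split: if_splits)
qed

lemma sharp_interval:
  assumes "sharp N I" "A \<in> I"
  obtains a b where "1 \<le> a" "a < b" "b \<le> N" "A = {a..b}"
proof -
  have "interval_system N I" "\<forall>A\<in>I. Min A \<noteq> Max A"
    using assms(1) unfolding sharp_def by blast+
  then obtain a b where ab: "1 \<le> a" "a \<le> b" "b \<le> N" "A = {a..b}" and "Min A \<noteq> Max A"
    using assms(2) unfolding interval_system_def by metis
  then have "a < b" by simp
  with ab show thesis using that by blast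
qed

lemma sharp_extremes:
  assumes "sharp N I" "A \<in> I"
  shows "extremes A \<subseteq> A" "card (extremes A) = 2" "Min A < Max A" "A \<subseteq> {1..N}"
proof -
  obtain a b where ab: "1 \<le> a" "a < b" "b \<le> N" "A = {a..b}"
    using sharp_interval[OF assms] .
  then have "Min A = a" "Max A = b" by simp_all
  with ab show "extremes A \<subseteq> A" "card (extremes A) = 2" "Min A < Max A" "A \<subseteq> {1..N}"
    unfolding extremes_def by simp_all
qed

lemma sharp_extreme_owner_unique:
  assumes "sharp N I" "F \<in> I" "G \<in> I" "x \<in> extremes F" "x \<in> extremes G"
  shows "F = G"
  using assms unfolding sharp_def by blast

lemma sharp_cover:
  assumes "sharp N I"
  shows "(\<Union>A\<in>I. extremes A) = {1..N}"
proof (rule card_subset_eq)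
  show "(\<Union>A\<in>I. extremes A) \<subseteq> {1..N}" using sharp_extremes[OF assms] by blast
  have "finite I" using assms unfolding sharp_def interval_system_def by blast
  then have "card (\<Union>A\<in>I. extremes A) = (\<Sum>A\<in>I. card (extremes A))"
    by (rule card_UN_disjoint) (use assms in \<open>auto simp: sharp_def extremes_def\<close>)
  also have "\<dots> = N" using assms sharp_extremes[OF assms] by (simp add: sharp_def)
  finally show "card (\<Union>A\<in>I. extremes A) = card {1..N}" by simp
qed simp

lemma sharp_nested:
  assumes "sharp N I" "F \<in> I" "B \<in> I" "B \<subseteq> F" "B \<noteq> F"
  shows "extremes F \<inter> B = {}"
proof -
  obtain a b where F: "a < b" "F = {a..b}" using sharp_interval[OF assms(1,2)] by blast
  obtain c d where B: "c < d" "B = {c..d}" using sharp_interval[OF assms(1,3)] by blast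
  have "a \<le> c" "d \<le> b" using assms(4) F B by auto
  then have "extremes F \<inter> B \<subseteq> extremes B" using F B by (auto simp: extremes_def)
  then show ?thesis using sharp_extreme_owner_unique[OF assms(1-3)] assms(5) by blast
qed

section \<open>Counting extreme points by relative position\<close>

definition position_count :: "'a set \<Rightarrow> 'a set \<Rightarrow> nat" where
  "position_count F B = (if F \<subseteq> B then 2 else if B \<subseteq> F \<or> F \<inter> B = {} then 0 else 1)"

lemma sharp_extremes_count:
  assumes "sharp N I" "F \<in> I" "B \<in> I"
  shows "card (extremes F \<inter> B) = position_count F B"
proof -
  obtain a b where F: "a < b" "F = {a..b}" using sharp_interval[OF assms(1,2)] by blast
  obtain c d where B: "B = {c..d}" using sharp_interval[OF assms(1,3)] by blast
  have ext: "extremes F = {a, b}" using F by (simp add: extremes_def)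
  consider "F \<subseteq> B" | "\<not> F \<subseteq> B" "B \<subseteq> F" | "\<not> F \<subseteq> B" "F \<inter> B = {}"
    | "\<not> F \<subseteq> B" "\<not> B \<subseteq> F" "F \<inter> B \<noteq> {}"
    by blast
  then show ?thesis
  proof cases
    case 1
    then show ?thesis using sharp_extremes[OF assms(1,2)]
      by (simp add: position_count_def Int_absorb2)
  next
    case 2
    then show ?thesis using sharp_nested[OF assms] by (auto simp: position_count_def)
  next
    case 3
    then have "extremes F \<inter> B = {}" using sharp_extremes[OF assms(1,2)] by blast
    then show ?thesis using 3 by (simp add: position_count_def)
  next
    case 4
    then have "card (extremes F \<inter> B) = 1"
      using crossing_interval_count[OF \<open>a < b\<close>, of c d] ext F B by simp
    with 4 show ?thesis by (simp add: position_count_def)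
  qed
qed

lemma position_count_image:
  assumes "inj_on f V" "F \<subseteq> V" "B \<subseteq> V"
  shows "position_count (f ` F) (f ` B) = position_count F B"
proof -
  have sub_iff: "f ` X \<subseteq> f ` Y \<longleftrightarrow> X \<subseteq> Y" if "X \<subseteq> V" "Y \<subseteq> V" for X Y
  proof -
    have "f ` X \<subseteq> f ` Y \<longleftrightarrow> f ` (X \<inter> Y) = f ` X"
      using inj_on_image_Int[OF assms(1) that] by blast
    also have "\<dots> \<longleftrightarrow> X \<inter> Y = X"
      using that by (intro inj_on_image_eq_iff[OF assms(1)]) auto
    finally show ?thesis by blast
  qed
  have "f ` F \<subseteq> f ` B \<longleftrightarrow> F \<subseteq> B" "f ` B \<subseteq> f ` F \<longleftrightarrow> B \<subseteq> F"
    using sub_iff assms(2,3) by blast+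
  moreover have "f ` F \<inter> f ` B = {} \<longleftrightarrow> F \<inter> B = {}"
    by (simp flip: inj_on_image_Int[OF assms])
  ultimately show ?thesis unfolding position_count_def by simp
qed

section \<open>Preimages of the extreme points of an image interval\<close>

definition extreme_preimage :: "(nat \<Rightarrow> nat) \<Rightarrow> nat set \<Rightarrow> nat set" where
  "extreme_preimage \<psi> F = {x \<in> F. \<psi> x \<in> extremes (\<psi> ` F)}"

lemma image_extreme_preimage:
  assumes "extremes (\<psi> ` F) \<subseteq> \<psi> ` F"
  shows "\<psi> ` extreme_preimage \<psi> F = extremes (\<psi> ` F)"
  using assms unfolding extreme_preimage_def by blast

lemma hyp_iso_inj_image:
  assumes "hyp_iso \<psi> V I V' J"
  shows "inj_on \<psi> V" "J = (\<lambda>A. \<psi> ` A) ` I"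
  using assms unfolding hyp_iso_def bij_betw_def by auto

lemma card_2_ordered:
  fixes P :: "nat set"
  assumes "card P = 2"
  obtains x y where "P = {x, y}" "x < y"
proof -
  obtain x y where xy: "P = {x, y}" "x \<noteq> y" using assms unfolding card_2_iff by blast
  show thesis
  proof (cases "x < y")
    case True
    then show thesis by (rule that[OF xy(1)])
  next
    case False
    then have "y < x" using xy(2) by simp
    moreover have "P = {y, x}" using xy(1) by (simp add: insert_commute)
    ultimately show thesis using that by blast
  qed
qed

lemma extreme_preimage_shape:
  assumes sI: "sharp N I" and sJ: "sharp N' J" and iso: "hyp_iso \<psi> {1..N} I {1..N'} J"
    and F: "F \<in> I"
  defines "P \<equiv> extreme_preimage \<psi> F"
  shows "P = {Min P, Max P}" "Min F \<le> Min P" "Min P < Max P" "Max P \<le> Max F"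
proof -
  note inj = hyp_iso_inj_image(1)[OF iso]
  have PF: "P \<subseteq> F" unfolding P_def extreme_preimage_def by blast
  have PV: "P \<subseteq> {1..N}" using PF sharp_extremes(4)[OF sI F] by (rule order_trans)
  have GJ: "\<psi> ` F \<in> J" using hyp_iso_inj_image(2)[OF iso] F by blast
  have "card P = card (\<psi> ` P)"
    by (rule card_image[symmetric, OF inj_on_subset[OF inj PV]])
  also have "\<psi> ` P = extremes (\<psi> ` F)"
    unfolding P_def by (rule image_extreme_preimage[OF sharp_extremes(1)[OF sJ GJ]])
  finally have "card P = 2" using sharp_extremes(2)[OF sJ GJ] by simp
  then obtain x y where xy: "P = {x, y}" "x < y" by (rule card_2_ordered)
  then show "P = {Min P, Max P}" "Min P < Max P" by auto
  obtain a b where "a < b" "F = {a..b}" using sharp_interval[OF sI F] by blast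
  then show "Min F \<le> Min P" "Max P \<le> Max F" using PF xy by auto
qed

text \<open>The preimages of the extreme points of \<open>\<psi>(F)\<close> lie in exactly as many intervals
  of \<open>I\<close> as the extreme points of \<open>F\<close>: both counts equal the relative position of the
  intervals, which \<open>\<psi>\<close> preserves.\<close>
lemma extreme_preimage_count:
  assumes sI: "sharp N I" and sJ: "sharp N' J" and iso: "hyp_iso \<psi> {1..N} I {1..N'} J"
    and F: "F \<in> I" and B: "B \<in> I"
  shows "card (extreme_preimage \<psi> F \<inter> B) = card (extremes F \<inter> B)"
proof -
  let ?P = "extreme_preimage \<psi> F"
  note inj = hyp_iso_inj_image(1)[OF iso]
  have FV: "F \<subseteq> {1..N}" and BV: "B \<subseteq> {1..N}" using sharp_extremes(4) sI F B by blast+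
  have PF: "?P \<subseteq> F" unfolding extreme_preimage_def by blast
  have GJ: "\<psi> ` F \<in> J" and HJ: "\<psi> ` B \<in> J" using hyp_iso_inj_image(2)[OF iso] F B by blast+
  have PV: "?P \<subseteq> {1..N}" using PF FV by (rule order_trans)
  have "\<psi> ` (?P \<inter> B) = \<psi> ` ?P \<inter> \<psi> ` B" by (rule inj_on_image_Int[OF inj PV BV])
  also have "\<psi> ` ?P = extremes (\<psi> ` F)"
    by (rule image_extreme_preimage[OF sharp_extremes(1)[OF sJ GJ]])
  finally have image: "\<psi> ` (?P \<inter> B) = extremes (\<psi> ` F) \<inter> \<psi> ` B" .
  have "card (?P \<inter> B) = card (\<psi> ` (?P \<inter> B))"
    using PV by (intro card_image[symmetric] inj_on_subset[OF inj]) blast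
  also have "\<dots> = card (extremes (\<psi> ` F) \<inter> \<psi> ` B)" by (simp only: image)
  also have "\<dots> = position_count (\<psi> ` F) (\<psi> ` B)"
    by (rule sharp_extremes_count[OF sJ GJ HJ])
  also have "\<dots> = position_count F B" by (rule position_count_image[OF inj FV BV])
  also have "\<dots> = card (extremes F \<inter> B)" by (rule sharp_extremes_count[OF sI F B, symmetric])
  finally show ?thesis .
qed

lemma extreme_preimage_transfer:
  assumes sI: "sharp N I" and sJ: "sharp N' J" and iso: "hyp_iso \<psi> {1..N} I {1..N'} J"
    and F: "F \<in> I" and B: "B \<in> I"
  defines "P \<equiv> extreme_preimage \<psi> F"
  shows "(Min P \<in> B \<longleftrightarrow> Min F \<in> B) \<and> (Max P \<in> B \<longleftrightarrow> Max F \<in> B)"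
proof -
  note shape = extreme_preimage_shape[OF sI sJ iso F, folded P_def]
  obtain c d where cd: "B = {c..d}" using sharp_interval[OF sI B] by blast
  have "card ({Min P, Max P} \<inter> {c..d}) = card ({Min F, Max F} \<inter> {c..d})"
    using extreme_preimage_count[OF sI sJ iso F B] shape(1) cd
    unfolding P_def extremes_def by simp
  from interval_transfer[OF shape(2-4) this] show ?thesis using cd by simp
qed

section \<open>The endpoint correction\<close>

definition extreme_owner :: "nat set set \<Rightarrow> nat \<Rightarrow> nat set" where
  "extreme_owner I x = (THE F. F \<in> I \<and> x \<in> extremes F)"

lemma extreme_owner_eq:
  assumes "sharp N I" "F \<in> I" "x \<in> extremes F"
  shows "extreme_owner I x = F"
  unfolding extreme_owner_def
  using assms sharp_extreme_owner_unique[OF assms(1)] by (intro the_equality) blast+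

definition endpoint_correction :: "(nat \<Rightarrow> nat) \<Rightarrow> nat set set \<Rightarrow> nat \<Rightarrow> nat" where
  "endpoint_correction \<psi> I x =
     (let F = extreme_owner I x
      in if x = Min F then Min (extreme_preimage \<psi> F) else Max (extreme_preimage \<psi> F))"

lemma endpoint_correction_endpoints:
  assumes "sharp N I" "F \<in> I"
  shows "endpoint_correction \<psi> I (Min F) = Min (extreme_preimage \<psi> F)"
    "endpoint_correction \<psi> I (Max F) = Max (extreme_preimage \<psi> F)"
proof -
  have "extreme_owner I (Min F) = F" "extreme_owner I (Max F) = F"
    using extreme_owner_eq[OF assms] by (simp_all add: extremes_def)
  moreover have "Min F \<noteq> Max F" using sharp_extremes(3)[OF assms] by simp
  ultimately show "endpoint_correction \<psi> I (Min F) = Min (extreme_preimage \<psi> F)"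
    "endpoint_correction \<psi> I (Max F) = Max (extreme_preimage \<psi> F)"
    unfolding endpoint_correction_def by simp_all
qed

lemma endpoint_correction_extremes:
  assumes sI: "sharp N I" and sJ: "sharp N' J" and iso: "hyp_iso \<psi> {1..N} I {1..N'} J"
    and F: "F \<in> I"
  shows "(\<psi> \<circ> endpoint_correction \<psi> I) ` extremes F = extremes (\<psi> ` F)"
proof -
  have GJ: "\<psi> ` F \<in> J" using hyp_iso_inj_image(2)[OF iso] F by blast
  have "endpoint_correction \<psi> I ` extremes F = extreme_preimage \<psi> F"
    using endpoint_correction_endpoints[OF sI F] extreme_preimage_shape(1)[OF sI sJ iso F]
    by (simp add: extremes_def)
  then show ?thesis unfolding image_comp[symmetric]
    using image_extreme_preimage[OF sharp_extremes(1)[OF sJ GJ]] by simp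
qed

lemma endpoint_correction_mem:
  assumes sI: "sharp N I" and sJ: "sharp N' J" and iso: "hyp_iso \<psi> {1..N} I {1..N'} J"
    and x: "x \<in> {1..N}" and B: "B \<in> I"
  shows "endpoint_correction \<psi> I x \<in> B \<longleftrightarrow> x \<in> B"
proof -
  obtain F where F: "F \<in> I" "x \<in> extremes F" using x sharp_cover[OF sI] by blast
  then have "x = Min F \<or> x = Max F" by (simp add: extremes_def)
  then show ?thesis
    using endpoint_correction_endpoints[OF sI F(1)] extreme_preimage_transfer[OF sI sJ iso F(1) B]
    by auto
qed

text \<open>A map sending the extreme points of every interval of \<open>I\<close> onto the extreme points of
  the corresponding interval of \<open>J\<close> is a bijection of the vertex sets, because the extreme
  points cover both vertex sets and these have the same size.\<close>
lemma extremes_preserving_bij: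
  assumes sI: "sharp N I" and sJ: "sharp N' J" and N: "N' = N"
    and J: "J = (\<lambda>A. \<psi> ` A) ` I"
    and ext: "\<And>A. A \<in> I \<Longrightarrow> g ` extremes A = extremes (\<psi> ` A)"
  shows "bij_betw g {1..N} {1..N'}"
proof -
  have "g ` {1..N} = (\<Union>A\<in>I. g ` extremes A)" using sharp_cover[OF sI] by blast
  also have "\<dots> = (\<Union>A\<in>I. extremes (\<psi> ` A))" using ext by simp
  also have "\<dots> = (\<Union>G\<in>J. extremes G)" using J by simp
  also have "\<dots> = {1..N'}" by (rule sharp_cover[OF sJ])
  finally have img: "g ` {1..N} = {1..N'}" .
  then have "inj_on g {1..N}" using N by (intro eq_card_imp_inj_on) auto
  with img show ?thesis unfolding bij_betw_def by blast
qed

lemma inj_on_image_subset_eq: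
  assumes "inj_on g V" "inj_on f V" "A \<subseteq> V" "finite A" "g ` A \<subseteq> f ` A"
  shows "g ` A = f ` A"
proof (rule card_subset_eq)
  show "card (g ` A) = card (f ` A)"
    using assms(1-3) by (simp add: card_image inj_on_subset)
qed (use assms(4,5) in auto)

theorem lemma10:
  fixes N N' :: nat and I J :: "nat set set" and \<psi> :: "nat \<Rightarrow> nat"
  assumes "sharp N I" and "sharp N' J"
    and "\<exists>f. hyp_iso f {1..N} I {1..N'} J"
    and "hyp_iso \<psi> {1..N} I {1..N'} J"
  shows "\<exists>\<psi>'. hyp_iso \<psi>' {1..N} I {1..N'} J \<and>
           (\<forall>A\<in>I. \<psi>' ` A = \<psi> ` A) \<and>
           (\<forall>A\<in>I. \<psi>' ` extremes A = extremes (\<psi> ` A))"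
proof -
  note sI = assms(1) and sJ = assms(2) and iso = assms(4)
  note inj = hyp_iso_inj_image(1)[OF iso] and J = hyp_iso_inj_image(2)[OF iso]
  define \<psi>' where "\<psi>' = \<psi> \<circ> endpoint_correction \<psi> I"
  have ext: "\<psi>' ` extremes A = extremes (\<psi> ` A)" if "A \<in> I" for A
    unfolding \<psi>'_def by (rule endpoint_correction_extremes[OF sI sJ iso that])
  have "N' = N" using iso bij_betw_same_card unfolding hyp_iso_def by fastforce
  then have bij: "bij_betw \<psi>' {1..N} {1..N'}"
    using extremes_preserving_bij[OF sI sJ _ J ext] by blast
  have same: "\<psi>' ` A = \<psi> ` A" if A: "A \<in> I" for A
  proof (rule inj_on_image_subset_eq[OF bij_betw_imp_inj_on[OF bij] inj])
    show AV: "A \<subseteq> {1..N}" by (rule sharp_extremes(4)[OF sI A])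
    then show "finite A" by (rule finite_subset) simp
    show "\<psi>' ` A \<subseteq> \<psi> ` A"
      using endpoint_correction_mem[OF sI sJ iso _ A] AV unfolding \<psi>'_def by auto
  qed
  have "hyp_iso \<psi>' {1..N} I {1..N'} J"
    unfolding hyp_iso_def using bij same J by simp
  with same ext show ?thesis by blast
qed

end
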